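(* For every positive integer $n$ there exists a positive integer $x$ such that the entry in row $x$, column $x-1$ of $T_2$ equals $n$. In particular every positive integer appears as an entry of $T_2$, and the sequence $a_2(n)=\min\{x\in\mathbb{N}: T_2(x,x-1)=n\}$ is defined for all positive integers $n$.
   Context: For a positive integer $m$, the triangle $T_m$ is an array whose row $x$ ($x=1,2,\dots$) has $x$ entries, in columns $0,\dots,x-1$. Row $1$ is the single entry $1$. For $x>1$, row $x$ is obtained from row $x-1$ by rotating it cyclically left by $m$ positions (the entry in column $c$ of row $x-1$ moves to column $(c-m)\bmod(x-1)\in\{0,\dots,x-2\}$ of row $x$), then appending in column $x-1$ a new entry equal to $1$ plus the entry in column $0$ of row $x-1$. $T_m(x,c)$ denotes the entry in row $x$, column $c$. Here $m=2$. *)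

theory Defs
  imports Main
begin

text \<open>Row x of the triangle T_m, as a list of length x (columns 0..x-1), for x \<ge> 1.
  T_row m (Suc k) is row k+1. Row 1 is [1]. Row x+1 is obtained from row x by
  rotating cyclically left by m positions (Isabelle's rotate is a left rotation:
  entry in column c moves to column (c - m) mod x) and appending 1 + (column 0 entry of row x).
  T_row m 0 is an unused dummy value.\<close>

fun T_row :: "nat \<Rightarrow> nat \<Rightarrow> nat list" where
  "T_row m 0 = []"
| "T_row m (Suc 0) = [1]"
| "T_row m (Suc (Suc k)) =
     rotate m (T_row m (Suc k)) @ [hd (T_row m (Suc k)) + 1]"

definition T :: "nat \<Rightarrow> nat \<Rightarrow> nat \<Rightarrow> nat" where
  "T m x c = T_row m x ! c"

end

theory Submission
  imports Defs
begin

text \<open>Every entry of a row of \<open>T\<^sub>2\<close> eventually reaches column 0: rotation moves an entry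
  two columns to the left, so entries in even columns arrive there directly, while an entry
  in column 1 of row \<open>x\<close> wraps around to column \<open>x - 1\<close>. If \<open>x\<close> is odd this column is even;
  if \<open>x = 2k\<close> the entry returns to column 1 in row \<open>3k\<close>, which has smaller 2-adic valuation,
  so the process ends. Since the last entry of each row is the column-0 entry of the previous
  row plus one, induction shows that every positive integer occurs in column 0, and hence as
  a last entry.\<close>

lemma length_T_row: "length (T_row m x) = x"
  by (induction m x rule: T_row.induct) auto

lemma T_row_Suc:
  assumes "0 < x"
  shows "T_row m (Suc x) = rotate m (T_row m x) @ [T m x 0 + 1]"
proof -
  obtain k where "x = Suc k" using assms by (cases x) auto
  then show ?thesis
    using length_T_row[of m x] by (cases k) (auto simp: T_def hd_conv_nth)
qed

lemma T_row_Suc_drop_take: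
  assumes "0 < x" and "m \<le> x"
  shows "T_row m (Suc x) = drop m (T_row m x) @ take m (T_row m x) @ [T m x 0 + 1]"
proof (cases "m = x")
  case True
  then show ?thesis using T_row_Suc[OF assms(1)] by (simp add: length_T_row)
next
  case False
  then have "m mod length (T_row m x) = m" using assms(2) by (simp add: length_T_row)
  then show ?thesis using T_row_Suc[OF assms(1)] by (simp add: rotate_drop_take)
qed

lemma T_Suc_shift:
  assumes "c + m < x"
  shows "T m (Suc x) c = T m x (c + m)"
proof -
  have "c < length (drop m (T_row m x))" using assms by (simp add: length_T_row)
  then show ?thesis
    using T_row_Suc_drop_take[of x m] assms by (simp add: T_def nth_append add.commute)
qed

lemma T_add_shift:
  assumes "c + m * k < x"
  shows "T m (x + k) c = T m x (c + m * k)"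
  using assms
proof (induction k arbitrary: x)
  case 0
  then show ?case by simp
next
  case (Suc k)
  have "T m (Suc x + k) c = T m (Suc x) (c + m * k)"
    using Suc.IH[of "Suc x"] Suc.prems by simp
  also have "\<dots> = T m x (c + m * Suc k)"
    using T_Suc_shift[of "c + m * k" m x] Suc.prems by (simp add: algebra_simps)
  finally show ?case by simp
qed

lemma T_Suc_wrap:
  assumes "i < m" and "m \<le> x"
  shows "T m (Suc x) (x - (m - i)) = T m x i"
proof -
  have "x - (m - i) = length (drop m (T_row m x)) + i"
    using assms by (simp add: length_T_row)
  then have "T m (Suc x) (x - (m - i)) = (take m (T_row m x) @ [T m x 0 + 1]) ! i"
    using T_row_Suc_drop_take[of x m] assms by (simp only: T_def nth_append_length_plus)
  also have "\<dots> = T m x i" using assms by (simp add: T_def nth_append length_T_row)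
  finally show ?thesis .
qed

lemma T_Suc_last:
  assumes "0 < x"
  shows "T m (Suc x) x = T m x 0 + 1"
  using T_row_Suc[OF assms] by (simp add: T_def nth_append length_T_row)

definition leading_entries :: "nat \<Rightarrow> nat set" where
  "leading_entries m = {T m y 0 | y. 0 < y}"

lemma leading_entriesI: "0 < y \<Longrightarrow> T m y 0 \<in> leading_entries m"
  unfolding leading_entries_def by blast

lemma T_in_leading_entries_if_dvd:
  assumes "m dvd c" and "c < x"
  shows "T m x c \<in> leading_entries m"
proof -
  obtain k where c: "c = m * k" using assms(1) by (rule dvdE)
  have "T m (x + k) 0 = T m x c" using T_add_shift[of 0 m k x] assms(2) c by simp
  then show ?thesis using leading_entriesI[of "x + k" m] assms(2) by simp
qed

lemma T_2_column_1_in_leading_entries: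
  assumes "\<not> 2 ^ n dvd x" and "2 \<le> x"
  shows "T 2 x 1 \<in> leading_entries 2"
  using assms
proof (induction n arbitrary: x)
  case 0
  then show ?case by simp
next
  case (Suc n)
  have wrap: "T 2 (Suc x) (x - 1) = T 2 x 1"
    using T_Suc_wrap[of 1 2 x] Suc.prems(2) by simp
  show ?case
  proof (cases "even x")
    case False
    then have "even (x - 1)" by simp
    then show ?thesis using T_in_leading_entries_if_dvd[of 2 "x - 1" "Suc x"] wrap by simp
  next
    case True
    define j where "j = x div 2 - 1"
    have x: "x = 2 * (j + 1)" using True Suc.prems(2) unfolding j_def by presburger
    have return: "T 2 (Suc x + j) 1 = T 2 x 1"
      using T_add_shift[of 1 2 j "Suc x"] wrap x by simp
    have row: "Suc x + j = 3 * (j + 1)" using x by simp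
    have "\<not> 2 ^ n dvd Suc x + j"
      unfolding row
    proof
      assume "2 ^ n dvd 3 * (j + 1)"
      moreover have "coprime ((2::nat) ^ n) 3" by simp
      ultimately have "2 ^ n dvd j + 1" using coprime_dvd_mult_right_iff by blast
      then have "2 * 2 ^ n dvd x" unfolding x by (rule mult_dvd_mono[OF dvd_refl])
      with Suc.prems(1) show False by simp
    qed
    then show ?thesis using Suc.IH[of "Suc x + j"] return x by simp
  qed
qed

lemma T_2_in_leading_entries:
  assumes "c < x"
  shows "T 2 x c \<in> leading_entries 2"
proof (cases "even c")
  case True
  then show ?thesis using T_in_leading_entries_if_dvd assms by blast
next
  case False
  then obtain k where c: "c = 1 + 2 * k" by (metis oddE add.commute)
  have "T 2 (x + k) 1 = T 2 x c" using T_add_shift[of 1 2 k x] assms c by simp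
  moreover have "\<not> 2 ^ (x + k) dvd x + k"
    using assms by (simp add: nat_dvd_not_less less_exp)
  ultimately show ?thesis
    using T_2_column_1_in_leading_entries[of "x + k" "x + k"] assms c by simp
qed

lemma positive_in_leading_entries_2:
  assumes "1 \<le> v"
  shows "v \<in> leading_entries 2"
  using assms
proof (induction v rule: nat_induct_at_least)
  case base
  show ?case using leading_entriesI[of 1 2] by (simp add: T_def)
next
  case (Suc v)
  then obtain y where "0 < y" "T 2 y 0 = v" unfolding leading_entries_def by blast
  then have "T 2 (Suc y) y = Suc v" using T_Suc_last by simp
  then show ?case using T_2_in_leading_entries[of y "Suc y"] by simp
qed

theorem mainTheorem6:
  fixes n :: nat
  assumes "n \<ge> 1"
  shows "\<exists>x::nat. x \<ge> 1 \<and> T 2 x (x - 1) = n"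
proof (cases "n = 1")
  case True
  then show ?thesis by (intro exI[of _ 1]) (simp add: T_def)
next
  case False
  then obtain y where "0 < y" "T 2 y 0 = n - 1"
    using positive_in_leading_entries_2[of "n - 1"] assms
    unfolding leading_entries_def by force
  then have "T 2 (Suc y) y = n" using T_Suc_last False assms by simp
  then show ?thesis by (intro exI[of _ "Suc y"]) simp
qed

end
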